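(* Let $s$ be a positive integer, let $\lambda,\eta,n$ be numbers (e.g. reals), and put $c(x)=\lambda x+\eta$. Then $$\sum_{i=0}^{s-1}(-1)^i\binom{s-1}{i}c(n-i)^s+\sum_{i=s+1}^{2s}(-1)^{s+i}\binom{s-1}{2s-i}c(n-i)^s=\lambda^s(s+1)!.$$ *)

theory Defs
  imports Complex_Main
begin

end

(*
  Write bdiff f x = f x - f (x - 1) for the backward difference and p = c ^ s. The first sum
  is (bdiff ^^ (s-1)) p at n; after the shift i = k + s + 1 and the symmetry of the binomial
  coefficients, the second sum is minus the same difference at n - (s+1). Their sum therefore
  telescopes into the s + 1 values of (bdiff ^^ s) p at n, n - 1, ..., n - s. As p is a
  polynomial of degree s with leading coefficient lambda ^ s, its s-th difference is the
  constant lambda ^ s * s!, by the moment identity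
  sum_k (-1)^k (m choose k) k^j = 0 for j < m and (-1)^m m! for j = m.
*)
theory Submission
  imports Defs
begin

definition bdiff :: "('a::comm_ring_1 \<Rightarrow> 'a) \<Rightarrow> 'a \<Rightarrow> 'a" where
  "bdiff f x = f x - f (x - 1)"

lemma alternating_binomial_sum_Suc:
  fixes g :: "nat \<Rightarrow> 'a::comm_ring_1"
  shows "(\<Sum>k\<le>Suc m. (-1)^k * of_nat (Suc m choose k) * g k)
       = (\<Sum>k\<le>m. (-1)^k * of_nat (m choose k) * (g k - g (Suc k)))"
proof -
  have pascal: "(\<Sum>k\<le>Suc m. (-1)^k * of_nat (Suc m choose k) * g k)
     = g 0 + (\<Sum>k\<le>m. (-1)^Suc k * of_nat (m choose k) * g (Suc k))
           + (\<Sum>k\<le>m. (-1)^Suc k * of_nat (m choose Suc k) * g (Suc k))"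
    by (simp only: sum.atMost_Suc_shift) (simp add: sum.distrib[symmetric] algebra_simps)
  have "(\<Sum>k\<le>m. (-1)^k * of_nat (m choose k) * g k)
      = (\<Sum>k\<le>Suc m. (-1)^k * of_nat (m choose k) * g k)"
    by (simp add: binomial_eq_0)
  also have "\<dots> = g 0 + (\<Sum>k\<le>m. (-1)^Suc k * of_nat (m choose Suc k) * g (Suc k))"
    by (simp only: sum.atMost_Suc_shift) simp
  finally show ?thesis
    using pascal by (simp add: right_diff_distrib sum_subtractf sum_negf)
qed

lemma bdiff_iterate_eq_sum:
  "(bdiff ^^ m) f x = (\<Sum>k\<le>m. (-1)^k * of_nat (m choose k) * f (x - of_nat k))"
proof (induction m arbitrary: f)
  case 0
  show ?case by simp
next
  case (Suc m)
  have "(bdiff ^^ Suc m) f x = (\<Sum>k\<le>m. (-1)^k * of_nat (m choose k) * bdiff f (x - of_nat k))"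
    by (simp only: funpow_Suc_right comp_apply Suc.IH)
  also have "\<dots> = (\<Sum>k\<le>Suc m. (-1)^k * of_nat (Suc m choose k) * f (x - of_nat k))"
    by (subst alternating_binomial_sum_Suc) (simp add: bdiff_def algebra_simps)
  finally show ?case .
qed

lemma alternating_binomial_sum_power:
  assumes "j \<le> m"
  shows "(\<Sum>k\<le>m. (-1)^k * of_nat (m choose k) * of_nat k ^ j :: 'a::comm_ring_1)
       = (if j < m then 0 else (-1)^m * of_nat (fact m))"
  using assms
proof (induction m arbitrary: j)
  case 0
  then show ?case by simp
next
  case (Suc m)
  have "(\<Sum>k\<le>Suc m. (-1)^k * of_nat (Suc m choose k) * of_nat k ^ j :: 'a)
      = (\<Sum>k\<le>m. (-1)^k * of_nat (m choose k) * (of_nat k ^ j - of_nat (Suc k) ^ j))"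
    by (rule alternating_binomial_sum_Suc)
  also have "\<dots> = (\<Sum>k\<le>m. (-1)^k * of_nat (m choose k) * - (\<Sum>t<j. of_nat (j choose t) * of_nat k ^ t))"
  proof (rule sum.cong[OF refl])
    fix k
    have "(of_nat (Suc k) :: 'a) ^ j = (\<Sum>t\<le>j. of_nat (j choose t) * of_nat k ^ t)"
      using binomial_ring[of "of_nat k :: 'a" 1 j] by (simp add: add.commute)
    also have "\<dots> = (\<Sum>t<j. of_nat (j choose t) * of_nat k ^ t) + of_nat k ^ j"
      by (simp add: lessThan_Suc_atMost[symmetric])
    finally show "(-1)^k * of_nat (m choose k) * (of_nat k ^ j - of_nat (Suc k) ^ j)
        = (-1)^k * of_nat (m choose k) * - (\<Sum>t<j. of_nat (j choose t) * (of_nat k ^ t :: 'a))"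
      by simp
  qed
  also have "\<dots> = - (\<Sum>t<j. of_nat (j choose t) * (\<Sum>k\<le>m. (-1)^k * of_nat (m choose k) * of_nat k ^ t))"
    by (simp add: sum_distrib_left sum_negf algebra_simps sum.swap[of _ "{..<j}"])
  also have "\<dots> = - (\<Sum>t<j. of_nat (j choose t) * (if t < m then 0 else (-1)^m * of_nat (fact m)))"
    using Suc by (intro arg_cong[where f=uminus] sum.cong) auto
  also have "\<dots> = (if j < Suc m then 0 else (-1)^Suc m * of_nat (fact (Suc m)))"
  proof (cases "j = Suc m")
    case True
    have "(\<Sum>t<j. of_nat (j choose t) * (if t < m then 0 else (-1)^m * of_nat (fact m)))
        = (\<Sum>t\<in>{m}. of_nat (j choose t) * (if t < m then 0 else (-1)^m * of_nat (fact m)) :: 'a)"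
      by (rule sum.mono_neutral_right) (use True in auto)
    then show ?thesis
      using True by (simp add: algebra_simps)
  next
    case False
    then show ?thesis
      using Suc.prems by (auto intro!: sum.neutral)
  qed
  finally show ?case .
qed

lemma alternating_binomial_sum_linear_power:
  fixes a b :: "'a::comm_ring_1"
  shows "(\<Sum>k\<le>m. (-1)^k * of_nat (m choose k) * (a - b * of_nat k) ^ m)
       = b ^ m * of_nat (fact m)"
proof -
  have expand: "(a - b * of_nat k) ^ m
      = (\<Sum>j\<le>m. of_nat (m choose j) * (- b) ^ j * a ^ (m - j) * of_nat k ^ j)"
    for k :: nat
  proof -
    have "(a - b * of_nat k) ^ m = ((- b) * of_nat k + a) ^ m"
      by simp
    also have "\<dots> = (\<Sum>j\<le>m. of_nat (m choose j) * ((- b) * of_nat k) ^ j * a ^ (m - j))"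
      by (rule binomial_ring)
    finally show ?thesis
      by (simp only: power_mult_distrib mult_ac)
  qed
  have "(\<Sum>k\<le>m. (-1)^k * of_nat (m choose k) * (a - b * of_nat k) ^ m)
      = (\<Sum>j\<le>m. of_nat (m choose j) * (- b) ^ j * a ^ (m - j)
                  * (\<Sum>k\<le>m. (-1)^k * of_nat (m choose k) * of_nat k ^ j))"
    unfolding expand sum_distrib_left by (subst sum.swap) (simp only: mult_ac)
  also have "\<dots> = (\<Sum>j\<in>{m}. of_nat (m choose j) * (- b) ^ j * a ^ (m - j)
                  * (if j < m then 0 else (-1)^m * of_nat (fact m)))"
    by (rule sum.mono_neutral_cong_right) (auto simp: alternating_binomial_sum_power)
  also have "\<dots> = b ^ m * of_nat (fact m)"
    by (simp add: mult.assoc[symmetric] power_mult_distrib[symmetric])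
  finally show ?thesis .
qed

lemma bdiff_iterate_linear_power:
  "(bdiff ^^ m) (\<lambda>x. (a * x + b) ^ m) x = a ^ m * of_nat (fact m)"
proof -
  have "(bdiff ^^ m) (\<lambda>x. (a * x + b) ^ m) x
      = (\<Sum>k\<le>m. (-1)^k * of_nat (m choose k) * ((a * x + b) - a * of_nat k) ^ m)"
    by (simp add: bdiff_iterate_eq_sum algebra_simps)
  then show ?thesis
    by (simp add: alternating_binomial_sum_linear_power)
qed

lemma sum_bdiff_telescope:
  "(\<Sum>r<N. bdiff g (x - of_nat r)) = g x - g (x - of_nat N)"
  using sum_lessThan_telescope'[of "\<lambda>r. g (x - of_nat r)" N]
  by (simp add: bdiff_def algebra_simps)

lemma sum_reflected_eq_bdiff_iterate:
  fixes f :: "'a::comm_ring_1 \<Rightarrow> 'a"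
  assumes "s \<ge> 1"
  shows "(\<Sum>i=s+1..2*s. (-1)^(s+i) * of_nat ((s-1) choose (2*s-i)) * f (x - of_nat i))
       = - (bdiff ^^ (s-1)) f (x - of_nat (s+1))"
proof -
  obtain m where s: "s = Suc m"
    using assms by (cases s) auto
  have ivl: "{s+1..2*s} = {0+(s+1)..m+(s+1)}"
    using s by simp
  have term_shifted: "(-1)^(s+(k+(s+1))) * of_nat ((s-1) choose (2*s-(k+(s+1))))
        * f (x - of_nat (k+(s+1)))
      = - ((-1)^k * of_nat (m choose k) * f (x - of_nat (s+1) - of_nat k))"
    if "k \<le> m" for k
  proof -
    have index: "2*s-(k+(s+1)) = m - k"
      using s by simp
    have binomial: "(s-1) choose (m-k) = m choose k"
      using s that by (simp add: binomial_symmetric[symmetric])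
    have sign: "(-1::'a)^(s+(k+(s+1))) = - ((-1)^k)"
    proof -
      have "s+(k+(s+1)) = Suc (k + 2*s)"
        by simp
      then show ?thesis
        by (simp only:) (simp add: power_add power_mult)
    qed
    have "x - of_nat (k+(s+1)) = x - of_nat (s+1) - of_nat k"
      by (simp add: algebra_simps)
    then show ?thesis
      by (simp only: index binomial sign) simp
  qed
  have "(\<Sum>i=s+1..2*s. (-1)^(s+i) * of_nat ((s-1) choose (2*s-i)) * f (x - of_nat i))
      = (\<Sum>k=0..m. (-1)^(s+(k+(s+1))) * of_nat ((s-1) choose (2*s-(k+(s+1))))
                    * f (x - of_nat (k+(s+1))))"
    unfolding ivl by (rule sum.shift_bounds_cl_nat_ivl)
  also have "\<dots> = - (\<Sum>k\<le>m. (-1)^k * of_nat (m choose k) * f (x - of_nat (s+1) - of_nat k))"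
    unfolding atLeast0AtMost sum_negf[symmetric] by (intro sum.cong refl term_shifted) simp
  also have "\<dots> = - (bdiff ^^ (s-1)) f (x - of_nat (s+1))"
    by (simp add: s bdiff_iterate_eq_sum)
  finally show ?thesis .
qed

theorem proposition9:
  fixes s :: nat and lambda eta n :: real and c :: "real \<Rightarrow> real"
  assumes "s \<ge> 1"
    and "\<And>x. c x = lambda * x + eta"
  shows "(\<Sum>i=0..s-1. (-1)^i * real ((s-1) choose i) * c (n - real i) ^ s)
       + (\<Sum>i=s+1..2*s. (-1)^(s+i) * real ((s-1) choose (2*s-i)) * c (n - real i) ^ s)
       = lambda ^ s * fact (s+1)"
proof -
  define p where "p x = c x ^ s" for x
  define D where "D = (bdiff ^^ (s-1)) p"
  have first_sum: "(\<Sum>i=0..s-1. (-1)^i * real ((s-1) choose i) * c (n - real i) ^ s) = D n"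
    unfolding D_def bdiff_iterate_eq_sum p_def atLeast0AtMost by simp
  have second_sum: "(\<Sum>i=s+1..2*s. (-1)^(s+i) * real ((s-1) choose (2*s-i)) * c (n - real i) ^ s)
      = - D (n - real (s+1))"
    unfolding D_def p_def by (rule sum_reflected_eq_bdiff_iterate[OF assms(1)])
  have "bdiff D = (bdiff ^^ Suc (s-1)) p"
    by (simp add: D_def)
  then have "bdiff D = (bdiff ^^ s) p"
    using assms(1) by simp
  then have "D n - D (n - real (s+1)) = (\<Sum>r<s+1. (bdiff ^^ s) p (n - real r))"
    using sum_bdiff_telescope[of D n "s+1"] by simp
  also have "\<dots> = (s+1) * (lambda ^ s * fact s)"
    unfolding p_def assms(2) by (simp add: bdiff_iterate_linear_power)
  finally show ?thesis
    using first_sum second_sum by (simp add: algebra_simps)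
qed

end
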